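(* Let $n,m\ge 3$ and let $G=P_n\square P_m$ be the grid graph. Let $(x_1,y_1),\dots,(x_k,y_k)$ be vertices and $(p,q)$ another vertex such that either $p<x_i$ for all $i\in\{1,\dots,k\}$ or $p>x_i$ for all $i\in\{1,\dots,k\}$, and either $q<y_i$ for all $i\in\{1,\dots,k\}$ or $q>y_i$ for all $i\in\{1,\dots,k\}$. Then there exist two neighbours of $(p,q)$, of the form $(p^*,q)$ and $(p,q^* )$, that are not resolved by any of the vertices $(p,q),(x_1,y_1),\dots,(x_k,y_k)$.
   Context: The grid graph $P_n\square P_m$ has vertex set $\{(i,j):0\le i\le n-1,\ 0\le j\le m-1\}$, with $(i,j)$ adjacent to $(k,l)$ iff $|i-k|+|j-l|=1$; distance $d((i,j),(k,l))=|i-k|+|j-l|$. A vertex $w$ resolves $x,y$ if $d(w,x)\ne d(w,y)$. *)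

theory Defs
  imports Main
begin

definition grid_vertex :: "nat \<Rightarrow> nat \<Rightarrow> nat \<times> nat \<Rightarrow> bool" where
  "grid_vertex n m v \<longleftrightarrow> fst v < n \<and> snd v < m"

definition grid_dist :: "nat \<times> nat \<Rightarrow> nat \<times> nat \<Rightarrow> nat" where
  "grid_dist v w = nat \<bar>int (fst v) - int (fst w)\<bar> + nat \<bar>int (snd v) - int (snd w)\<bar>"

definition grid_adj :: "nat \<Rightarrow> nat \<Rightarrow> nat \<times> nat \<Rightarrow> nat \<times> nat \<Rightarrow> bool" where
  "grid_adj n m v w \<longleftrightarrow> grid_vertex n m v \<and> grid_vertex n m w \<and> grid_dist v w = 1"

definition resolves :: "nat \<times> nat \<Rightarrow> nat \<times> nat \<Rightarrow> nat \<times> nat \<Rightarrow> bool" where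
  "resolves w a b \<longleftrightarrow> grid_dist w a \<noteq> grid_dist w b"

end

theory Submission
  imports Defs
begin

text \<open>Move from (p,q) one step horizontally towards all landmarks, giving (p',q), and one step
  vertically towards all of them, giving (p,q'). Since every landmark lies strictly on one side of
  p and of q, each step shortens the distance to every landmark by exactly one, so both
  neighbours are at distance d - 1 from a landmark at distance d, and at distance 1 from (p,q).\<close>

definition unit_step_towards :: "nat \<Rightarrow> nat \<Rightarrow> nat set \<Rightarrow> bool" where
  "unit_step_towards p p' A \<longleftrightarrow>
     (p' = Suc p \<and> (\<forall>a\<in>A. p < a)) \<or> (Suc p' = p \<and> (\<forall>a\<in>A. a < p))"

lemma unit_step_towards_subset:
  "unit_step_towards p p' A \<Longrightarrow> B \<subseteq> A \<Longrightarrow> unit_step_towards p p' B"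
  unfolding unit_step_towards_def by blast

lemma ex_unit_step_towards:
  assumes "2 \<le> n" and "p < n" and "A \<subseteq> {..<n}"
    and side: "(\<forall>a\<in>A. p < a) \<or> (\<forall>a\<in>A. a < p)"
  shows "\<exists>p' < n. unit_step_towards p p' A"
proof (cases "Suc p < n \<and> (\<forall>a\<in>A. p < a)")
  case True
  then show ?thesis unfolding unit_step_towards_def by blast
next
  case False
  have below: "\<forall>a\<in>A. a < p"
  proof (cases "Suc p < n")
    case True
    with False side show ?thesis by blast
  next
    case False
    then have "\<forall>a\<in>A. a \<le> p" using assms(3) by auto
    with side show ?thesis by (meson leD)
  qed
  have "0 < p"
  proof (cases "Suc p < n")
    case True
    with False obtain a where "a \<in> A" by blast
    with below show ?thesis by auto
  next
    case False
    with assms(1) show ?thesis by linarith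
  qed
  then have "Suc (p - 1) = p" by simp
  moreover have "p - 1 < n" using assms(2) by simp
  ultimately show ?thesis using below unfolding unit_step_towards_def by blast
qed

lemma grid_dist_unit_step_fst:
  "unit_step_towards p p' A \<Longrightarrow> grid_dist (p, q) (p', q) = 1"
  unfolding unit_step_towards_def grid_dist_def by auto

lemma grid_dist_unit_step_snd:
  "unit_step_towards q q' A \<Longrightarrow> grid_dist (p, q) (p, q') = 1"
  unfolding unit_step_towards_def grid_dist_def by auto

lemma grid_dist_unit_steps_eq:
  assumes "unit_step_towards p p' {a}" and "unit_step_towards q q' {b}"
  shows "grid_dist (a, b) (p', q) = grid_dist (a, b) (p, q')"
  using assms unfolding unit_step_towards_def grid_dist_def by auto

theorem lemma2:
  fixes n m k p q :: nat and x y :: "nat \<Rightarrow> nat"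
  assumes "n \<ge> 3" and "m \<ge> 3"
    and "\<forall>i\<in>{1..k}. grid_vertex n m (x i, y i)"
    and "grid_vertex n m (p, q)"
    and "(\<forall>i\<in>{1..k}. p < x i) \<or> (\<forall>i\<in>{1..k}. p > x i)"
    and "(\<forall>i\<in>{1..k}. q < y i) \<or> (\<forall>i\<in>{1..k}. q > y i)"
  shows "\<exists>p' q'. grid_adj n m (p, q) (p', q) \<and> grid_adj n m (p, q) (p, q') \<and>
           (\<forall>w \<in> insert (p, q) ((\<lambda>i. (x i, y i)) ` {1..k}). \<not> resolves w (p', q) (p, q'))"
proof -
  have "2 \<le> n" and "p < n" and "x ` {1..k} \<subseteq> {..<n}"
    and "(\<forall>a\<in>x ` {1..k}. p < a) \<or> (\<forall>a\<in>x ` {1..k}. a < p)"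
    using assms(1,3,4,5) by (simp_all add: grid_vertex_def image_subset_iff)
  from ex_unit_step_towards[OF this]
  obtain p' where "p' < n" and p': "unit_step_towards p p' (x ` {1..k})"
    by blast
  have "2 \<le> m" and "q < m" and "y ` {1..k} \<subseteq> {..<m}"
    and "(\<forall>b\<in>y ` {1..k}. q < b) \<or> (\<forall>b\<in>y ` {1..k}. b < q)"
    using assms(2,3,4,6) by (simp_all add: grid_vertex_def image_subset_iff)
  from ex_unit_step_towards[OF this]
  obtain q' where "q' < m" and q': "unit_step_towards q q' (y ` {1..k})"
    by blast
  have "grid_adj n m (p, q) (p', q)" and "grid_adj n m (p, q) (p, q')"
    using \<open>p' < n\<close> \<open>q' < m\<close> assms(4) grid_dist_unit_step_fst[OF p'] grid_dist_unit_step_snd[OF q']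
    by (simp_all add: grid_adj_def grid_vertex_def)
  moreover have "\<not> resolves (x i, y i) (p', q) (p, q')" if "i \<in> {1..k}" for i
  proof -
    have "unit_step_towards p p' {x i}"
      using that by (intro unit_step_towards_subset[OF p']) simp
    moreover have "unit_step_towards q q' {y i}"
      using that by (intro unit_step_towards_subset[OF q']) simp
    ultimately show ?thesis by (simp add: resolves_def grid_dist_unit_steps_eq)
  qed
  moreover have "\<not> resolves (p, q) (p', q) (p, q')"
    using grid_dist_unit_step_fst[OF p'] grid_dist_unit_step_snd[OF q'] by (simp add: resolves_def)
  ultimately show ?thesis by blast
qed

end
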